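(* Let $X$ be a compact metric space and let $f\colon X\to X$ be a homeomorphism which is positively $n$-expansive (for some integer $n\geq1$), transitive, and has the shadowing property. Then $X$ is finite.
   Context: Let $(X,d)$ be a metric space and $f\colon X\to X$. For $x\in X$ and $c>0$, $W^s_c(x)=\{y\in X: d(f^k(y),f^k(x))\leq c \text{ for every } k\geq 0\}$. The map $f$ is positively $n$-expansive if there exists $c>0$ such that for every $x\in X$ the set $W^s_c(x)$ contains at most $n$ distinct points. $f$ is transitive if for every pair $U,V$ of nonempty open subsets of $X$ there is $k\in\mathbb{N}$ with $f^k(U)\cap V\neq\emptyset$. A sequence $(x_k)_{k\in\mathbb{Z}}$ is a $\delta$-pseudo orbit if $d(f(x_k),x_{k+1})<\delta$ for all $k$; it is $\varepsilon$-shadowed if there is $y\in X$ with $d(f^k(y),x_k)<\varepsilon$ for all $k\in\mathbb{Z}$. $f$ has the shadowing property if for every $\varepsilon>0$ there is $\delta>0$ such that every $\delta$-pseudo orbit is $\varepsilon$-shadowed. *)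

theory Defs
  imports "HOL-Analysis.Analysis"
begin

definition zpow :: "('a \<Rightarrow> 'a) \<Rightarrow> int \<Rightarrow> 'a \<Rightarrow> 'a" where
  "zpow f k = (if 0 \<le> k then f ^^ nat k else (inv f) ^^ nat (- k))"

definition stable_set :: "('a::metric_space \<Rightarrow> 'a) \<Rightarrow> real \<Rightarrow> 'a \<Rightarrow> 'a set" where
  "stable_set f c x = {y. \<forall>k::nat. dist ((f ^^ k) y) ((f ^^ k) x) \<le> c}"

definition pos_n_expansive :: "('a::metric_space \<Rightarrow> 'a) \<Rightarrow> nat \<Rightarrow> bool" where
  "pos_n_expansive f n \<longleftrightarrow>
     (\<exists>c>0. \<forall>x. finite (stable_set f c x) \<and> card (stable_set f c x) \<le> n)"

definition transitive :: "('a::topological_space \<Rightarrow> 'a) \<Rightarrow> bool" where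
  "transitive f \<longleftrightarrow> (\<forall>U V. open U \<and> open V \<and> U \<noteq> {} \<and> V \<noteq> {} \<longrightarrow>
     (\<exists>k::nat. k \<ge> 1 \<and> (f ^^ k) ` U \<inter> V \<noteq> {}))"

definition pseudo_orbit :: "('a::metric_space \<Rightarrow> 'a) \<Rightarrow> real \<Rightarrow> (int \<Rightarrow> 'a) \<Rightarrow> bool" where
  "pseudo_orbit f \<delta> xs \<longleftrightarrow> (\<forall>k. dist (f (xs k)) (xs (k + 1)) < \<delta>)"

definition shadowed :: "('a::metric_space \<Rightarrow> 'a) \<Rightarrow> real \<Rightarrow> (int \<Rightarrow> 'a) \<Rightarrow> bool" where
  "shadowed f \<epsilon> xs \<longleftrightarrow> (\<exists>y. \<forall>k. dist (zpow f k y) (xs k) < \<epsilon>)"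

definition shadowing :: "('a::metric_space \<Rightarrow> 'a) \<Rightarrow> bool" where
  "shadowing f \<longleftrightarrow> (\<forall>\<epsilon>>0. \<exists>\<delta>>0. \<forall>xs. pseudo_orbit f \<delta> xs \<longrightarrow> shadowed f \<epsilon> xs)"

end

theory Submission
  imports Defs
begin

text \<open>Shadowing the periodic pseudo-orbit obtained by closing up a recurrent orbit segment gives
  points f^(jk) y whose forward orbits stay close; since stable sets are finite, two of them
  coincide, so there is a periodic point p. If some q lay off its orbit, transitivity yields u near q
  whose orbit later comes near p. Gluing the backward orbit of that segment onto the orbit of p at
  ever earlier times gives pseudo-orbits that agree in forward time, so their shadows again lie in
  one finite stable set and two of them coincide; at a suitable negative time this single point is
  close both to u and to the orbit of p, which contradicts the choice of q.\<close>

lemma zpow_of_nat [simp]: "zpow f (int m) = f ^^ m"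
  by (simp add: zpow_def)

lemma zpow_minus_of_nat: "zpow f (- int m) x = (inv f ^^ m) x"
  by (auto simp: zpow_def)

lemma zpow_add_one:
  assumes "surj f"
  shows "f (zpow f t x) = zpow f (t + 1) x"
proof (cases "t \<ge> 0")
  case True
  then show ?thesis by (simp add: zpow_def nat_add_distrib)
next
  case False
  define m where "m = nat (- t - 1)"
  have m: "t = - int (Suc m)"
    using False by (simp add: m_def)
  have "zpow f t x = inv f ((inv f ^^ m) x)"
    unfolding m zpow_minus_of_nat by simp
  moreover have "zpow f (t + 1) x = (inv f ^^ m) x"
    using m zpow_minus_of_nat[of f m x] by simp
  ultimately show ?thesis
    using surj_f_inv_f[OF assms] by simp
qed

lemma zpow_minus_funpow_cancel:
  assumes "bij f"
  shows "zpow f (- int m) ((f ^^ m) x) = x"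
  using inv_fn_o_fn_is_id[OF assms, of m] by (simp add: zpow_minus_of_nat fun_eq_iff comp_def)

lemma finite_range_funpow_if_periodic:
  assumes "(f ^^ N) p = p" "N > 0"
  shows "finite (range (\<lambda>m. (f ^^ m) p))"
proof -
  have "range (\<lambda>m. (f ^^ m) p) = (\<lambda>m. (f ^^ m) p) ` {..<N}"
    using assms by (auto simp: funpow_mod_eq[OF assms(1)] intro!: image_eqI[where x = "m mod N" for m])
  then show ?thesis by simp
qed

lemma nat_sequence_in_finite_set_repeats:
  assumes "finite S" "\<And>j. Y j \<in> S"
  shows "\<exists>i j. i < j \<and> Y (i::nat) = Y j"
proof -
  have "\<not> inj Y"
    using assms finite_imageD[of Y UNIV] finite_subset[of "range Y" S] by auto
  then show ?thesis
    unfolding inj_def by (metis linorder_neqE_nat)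
qed

lemma shadows_of_common_forward_orbit_repeat:
  fixes f :: "'a::metric_space \<Rightarrow> 'a"
  assumes "\<And>x. finite (stable_set f c x)"
    and "\<And>j m. dist ((f ^^ m) (Y j)) (w m) < c / 2"
  shows "\<exists>i j. i < j \<and> Y (i::nat) = Y j"
proof (rule nat_sequence_in_finite_set_repeats)
  have "dist ((f ^^ m) (Y j)) ((f ^^ m) (Y 0)) < c" for j m
    by (rule dist_triangle_half_l[OF assms(2) assms(2)])
  then show "Y j \<in> stable_set f c (Y 0)" for j
    by (simp add: stable_set_def less_imp_le)
qed (rule assms(1))

lemma periodic_pseudo_orbit:
  assumes "k > 0" "dist ((f ^^ k) z) z < \<delta>" "\<delta> > 0"
  shows "pseudo_orbit f \<delta> (\<lambda>t. (f ^^ nat (t mod int k)) z)"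
  unfolding pseudo_orbit_def
proof
  fix t
  define r where "r = nat (t mod int k)"
  have "r < k" using assms(1) by (simp add: r_def nat_less_iff)
  have "t mod int k + 1 = int (Suc r)"
    using assms(1) by (simp add: r_def)
  then have "(t + 1) mod int k = int (Suc r mod k)"
    by (metis mod_add_left_eq of_nat_mod)
  then have "nat ((t + 1) mod int k) = Suc r mod k"
    by (simp only: nat_int)
  moreover have "f ((f ^^ r) z) = (f ^^ Suc r) z" by simp
  ultimately show "dist (f ((f ^^ nat (t mod int k)) z)) ((f ^^ nat ((t + 1) mod int k)) z) < \<delta>"
    using \<open>r < k\<close> assms(2,3) unfolding r_def[symmetric]
    by (cases "Suc r = k") simp_all
qed

lemma glued_pseudo_orbit:
  assumes "surj f" "dist (f a) (f b) < \<delta>" "\<delta> > 0"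
  shows "pseudo_orbit f \<delta> (\<lambda>t. zpow f (t - T) (if t \<le> T then a else b))"
  unfolding pseudo_orbit_def
proof
  fix t
  have step: "f (zpow f (t - T) x) = zpow f (t + 1 - T) x" for x
    using zpow_add_one[OF assms(1)] by (simp add: algebra_simps)
  have zero: "zpow f 0 x = x" and one: "zpow f 1 x = f x" for x
    using zpow_of_nat[of f 0] zpow_of_nat[of f 1] by simp_all
  consider "t + 1 \<le> T" | "t = T" | "t > T" by linarith
  then show "dist (f (zpow f (t - T) (if t \<le> T then a else b)))
      (zpow f (t + 1 - T) (if t + 1 \<le> T then a else b)) < \<delta>"
    by cases (use assms in \<open>simp_all add: step zero one\<close>)
qed

lemma transitive_obtains_near_return:
  fixes f :: "'a::metric_space \<Rightarrow> 'a"
  assumes "transitive f" "\<delta> > 0"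
  obtains z k where "k \<ge> 1" "dist ((f ^^ k) z) z < \<delta>"
proof -
  define B where "B = ball (undefined :: 'a) (\<delta> / 2)"
  have "open B" "B \<noteq> {}"
    using assms(2) by (auto simp: B_def)
  then obtain k z where "k \<ge> 1" "z \<in> B" "(f ^^ k) z \<in> B"
    using assms(1) unfolding transitive_def by blast
  then show thesis
    using that dist_triangle_half_r[of undefined _ \<delta>] by (auto simp: B_def)
qed

lemma exists_periodic_point:
  fixes f :: "'a::metric_space \<Rightarrow> 'a"
  assumes "c > 0" "\<And>x. finite (stable_set f c x)" "transitive f" "shadowing f"
  obtains p N where "N > 0" "(f ^^ N) p = p"
proof -
  obtain \<delta> where "\<delta> > 0" and shadow: "\<And>xs. pseudo_orbit f \<delta> xs \<Longrightarrow> shadowed f (c / 2) xs"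
    using assms(1,4) unfolding shadowing_def by (meson half_gt_zero)
  obtain z k where "k \<ge> 1" "dist ((f ^^ k) z) z < \<delta>"
    using transitive_obtains_near_return[OF assms(3) \<open>\<delta> > 0\<close>] .
  then have "pseudo_orbit f \<delta> (\<lambda>t. (f ^^ nat (t mod int k)) z)"
    using \<open>\<delta> > 0\<close> by (intro periodic_pseudo_orbit) auto
  then obtain y where y: "\<And>t. dist (zpow f t y) ((f ^^ nat (t mod int k)) z) < c / 2"
    using shadow unfolding shadowed_def by blast
  have "dist ((f ^^ (m + j * k)) y) ((f ^^ ((m + j * k) mod k)) z) < c / 2" for j m
    using y[of "int (m + j * k)"] unfolding zpow_of_nat by (simp only: nat_int flip: of_nat_mod)
  then have "dist ((f ^^ m) ((f ^^ (j * k)) y)) ((f ^^ (m mod k)) z) < c / 2" for j m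
    by (simp add: funpow_add)
  then obtain i j where "i < j" "(f ^^ (i * k)) y = (f ^^ (j * k)) y"
    using shadows_of_common_forward_orbit_repeat[where Y = "\<lambda>j. (f ^^ (j * k)) y"
        and w = "\<lambda>m. (f ^^ (m mod k)) z", OF assms(2)] by blast
  moreover have "(j - i) * k + i * k = j * k"
    using \<open>i < j\<close> by (simp add: diff_mult_distrib)
  then have "(f ^^ ((j - i) * k)) ((f ^^ (i * k)) y) = (f ^^ (j * k)) y"
    by (metis funpow_add comp_apply)
  ultimately show thesis
    using that[of "(j - i) * k"] \<open>k \<ge> 1\<close> by simp
qed

lemma near_periodic_orbit_if_orbit_approaches:
  fixes f :: "'a::metric_space \<Rightarrow> 'a"
  assumes "bij f" "\<And>x. finite (stable_set f c x)" "\<epsilon> \<le> c / 2"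
    and shadow: "\<And>xs. pseudo_orbit f \<delta> xs \<Longrightarrow> shadowed f \<epsilon> xs" and "\<delta> > 0"
    and "(f ^^ N) p = p" "N > 0"
    and "dist (f ((f ^^ k) u)) (f p) < \<delta>"
  obtains m where "dist u ((f ^^ m) p) < 2 * \<epsilon>"
proof -
  txt \<open>As L is a multiple of N exceeding k, every P j follows the orbit of p at nonnegative times,
    while at the time t below P i is at u and P j is on the orbit of p.\<close>
  define L where "L = N * (k + 1)"
  define T where "T j = - int (Suc j * L)" for j
  define P where "P j t = zpow f (t - T j) (if t \<le> T j then (f ^^ k) u else p)" for j t
  have "pseudo_orbit f \<delta> (P j)" for j
    unfolding P_def using assms(5,8) by (intro glued_pseudo_orbit bij_is_surj[OF assms(1)])
  then have "\<forall>j. \<exists>y. \<forall>t. dist (zpow f t y) (P j t) < \<epsilon>"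
    using shadow unfolding shadowed_def by blast
  then obtain Y where Y: "\<And>j t. dist (zpow f t (Y j)) (P j t) < \<epsilon>"
    by metis
  have "P j (int m) = (f ^^ m) p" for j m
  proof -
    have "0 < Suc j * L"
      using assms(7) by (simp add: L_def)
    then have "0 < int (Suc j * L)"
      by (simp only: of_nat_0_less_iff)
    then have "\<not> int m \<le> T j" "int m - T j = int (m + Suc j * L)"
      unfolding T_def by linarith+
    then have "P j (int m) = (f ^^ (m + Suc j * L)) p"
      by (simp only: P_def if_False zpow_of_nat)
    also have "Suc j * L = N * (Suc j * (k + 1))"
      by (simp add: L_def algebra_simps)
    then have "(m + Suc j * L) mod N = m mod N"
      by (simp only: mod_mult_self2)
    then have "(f ^^ (m + Suc j * L)) p = (f ^^ m) p"
      using funpow_mod_eq[OF assms(6), of "m + Suc j * L"] funpow_mod_eq[OF assms(6), of m] by simp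
    finally show ?thesis .
  qed
  then have "dist ((f ^^ m) (Y j)) ((f ^^ m) p) < c / 2" for j m
    using Y[where j = j and t = "int m"] assms(3) by simp
  then obtain i j where "i < j" "Y i = Y j"
    using shadows_of_common_forward_orbit_repeat[where w = "\<lambda>m. (f ^^ m) p", OF assms(2)] by blast
  define t where "t = - int (Suc i * L + k)"
  have "t \<le> T i" "t - T i = - int k"
    by (simp_all add: t_def T_def)
  then have "P i t = zpow f (- int k) ((f ^^ k) u)"
    by (simp only: P_def if_True)
  then have "P i t = u"
    using zpow_minus_funpow_cancel[OF assms(1)] by simp
  have "Suc i * L + k < Suc j * L"
  proof -
    have "k < L"
      using mult_le_mono1[of 1 N "k + 1"] assms(7) by (simp add: L_def)
    moreover have "Suc (Suc i) * L \<le> Suc j * L"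
      using \<open>i < j\<close> by (intro mult_le_mono1) simp
    ultimately show ?thesis by simp
  qed
  then have "int (Suc i * L + k) < int (Suc j * L)"
    by (simp only: of_nat_less_iff)
  then have "\<not> t \<le> T j" "t - T j = int (Suc j * L - (Suc i * L + k))"
    unfolding t_def T_def by (simp_all only: of_nat_diff less_imp_le)
  then have "P j t = (f ^^ (Suc j * L - (Suc i * L + k))) p"
    by (simp only: P_def if_False zpow_of_nat)
  moreover have "dist u (P j t) < 2 * \<epsilon>"
    using Y[where j = i and t = t] Y[where j = j and t = t] \<open>Y i = Y j\<close> \<open>P i t = u\<close>
      dist_triangle3[of u "P j t" "zpow f t (Y i)"]
    by simp
  ultimately show thesis
    using that by metis
qed

lemma periodic_orbit_eq_UNIV:
  fixes f :: "'a::metric_space \<Rightarrow> 'a"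
  assumes "bij f" "continuous_on UNIV f"
    and "c > 0" "\<And>x. finite (stable_set f c x)" "transitive f" "shadowing f"
    and "(f ^^ N) p = p" "N > 0"
  shows "range (\<lambda>m. (f ^^ m) p) = UNIV"
proof (rule ccontr)
  define orb where "orb = range (\<lambda>m. (f ^^ m) p)"
  assume "range (\<lambda>m. (f ^^ m) p) \<noteq> UNIV"
  then obtain q where "q \<notin> orb"
    by (auto simp: orb_def)
  have "finite orb"
    unfolding orb_def using assms(7,8) by (rule finite_range_funpow_if_periodic)
  then obtain d where "d > 0" and "\<forall>y\<in>orb. y \<noteq> q \<longrightarrow> d \<le> dist q y"
    using finite_set_avoid by blast
  with \<open>q \<notin> orb\<close> have far: "d \<le> dist q ((f ^^ m) p)" for m
    by (auto simp: orb_def)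
  define \<epsilon> where "\<epsilon> = min (c / 2) (d / 4)"
  have "\<epsilon> > 0"
    using assms(3) \<open>d > 0\<close> by (simp add: \<epsilon>_def)
  then obtain \<delta> where "\<delta> > 0" and shadow: "\<And>xs. pseudo_orbit f \<delta> xs \<Longrightarrow> shadowed f \<epsilon> xs"
    using assms(6) unfolding shadowing_def by blast
  obtain \<eta> where "\<eta> > 0" and near_p: "\<And>x. dist x p < \<eta> \<Longrightarrow> dist (f x) (f p) < \<delta>"
    using assms(2) \<open>\<delta> > 0\<close> unfolding continuous_on_iff by blast
  have "open (ball q (d / 2))" "ball q (d / 2) \<noteq> {}" "open (ball p \<eta>)" "ball p \<eta> \<noteq> {}"
    using \<open>d > 0\<close> \<open>\<eta> > 0\<close> by auto
  then obtain k where "(f ^^ k) ` ball q (d / 2) \<inter> ball p \<eta> \<noteq> {}"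
    using assms(5) unfolding transitive_def by blast
  then obtain u where "dist q u < d / 2" "dist ((f ^^ k) u) p < \<eta>"
    by (auto simp: dist_commute)
  moreover have "\<epsilon> \<le> c / 2"
    by (simp add: \<epsilon>_def)
  ultimately obtain m where "dist u ((f ^^ m) p) < 2 * \<epsilon>"
    using near_periodic_orbit_if_orbit_approaches[OF assms(1,4) _ shadow \<open>\<delta> > 0\<close> assms(7,8)] near_p
    by blast
  then show False
    using far[of m] \<open>dist q u < d / 2\<close> dist_triangle[of q "(f ^^ m) p" u] unfolding \<epsilon>_def by linarith
qed

theorem theoremB:
  fixes f :: "'a::metric_space \<Rightarrow> 'a" and n :: nat
  assumes "compact (UNIV :: 'a set)"
    and "homeomorphism UNIV UNIV f g"
    and "n \<ge> 1"
    and "pos_n_expansive f n"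
    and "transitive f"
    and "shadowing f"
  shows "finite (UNIV :: 'a set)"
proof -
  have "bij f" "continuous_on UNIV f"
    using assms(2) unfolding homeomorphism_def by (auto intro!: o_bij[of g f])
  obtain c where "c > 0" and finite_stable: "\<And>x. finite (stable_set f c x)"
    using assms(4) unfolding pos_n_expansive_def by blast
  obtain p N where "N > 0" "(f ^^ N) p = p"
    using exists_periodic_point[OF \<open>c > 0\<close> finite_stable assms(5,6)] .
  then have "range (\<lambda>m. (f ^^ m) p) = UNIV"
    using periodic_orbit_eq_UNIV[OF \<open>bij f\<close> \<open>continuous_on UNIV f\<close> \<open>c > 0\<close>
        finite_stable assms(5,6)] by blast
  then show ?thesis
    using finite_range_funpow_if_periodic[OF \<open>(f ^^ N) p = p\<close> \<open>N > 0\<close>] by simp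
qed

end
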